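(* $$\bigcup_{w\in A_1(\mathbb R^n)}L^1_w(\mathbb R^n)=\bigcup\{\mathcal X: M \text{ is bounded on } \mathcal X'\}=\bigcup\{\mathcal X:\mathcal X'\cap A_1(\mathbb R^n)\neq\varnothing\},$$ where the unions on the right are over Banach function spaces $\mathcal X$ on $\mathbb R^n$ with the stated property of the associate space $\mathcal X'$.
   Context: $Mf(x)=\sup_{Q\ni x}|Q|^{-1}\int_Q|f|$ over cubes $Q$. A weight is an a.e. positive locally integrable function; $A_1(\mathbb R^n)$ is the class of weights $w$ with $Mw\le Cw$ a.e. for some constant $C$; $L^1_w(\mathbb R^n)=\{f:\int|f|w<\infty\}$. A Banach function norm is a map $\rho$ from nonnegative measurable functions on $\mathbb R^n$ to $[0,\infty]$ such that: (i) $\rho(f)=0$ iff $f=0$ a.e., $\rho(af)=a\rho(f)$ for $a>0$, $\rho(f+g)\le\rho(f)+\rho(g)$; (ii) if $0\le f\le g$ a.e. then $\rho(f)\le\rho(g)$; (iii) if $f_n\uparrow f$ a.e. then $\rho(f_n)\uparrow\rho(f)$; (iv) $\rho(\chi_B)<\infty$ for every bounded set $B$; (v) for every bounded set $B$ there is $C_B\in(0,\infty)$ with $\int_Bf\,dx\le C_B\rho(f)$. The Banach function space $\mathcal X$ is the set of measurable $f$ with $\|f\|_{\mathcal X}=\rho(|f|)<\infty$. Its associate space $\mathcal X'$ is the set of measurable $g$ with $fg\in L^1(\mathbb R^n)$ for all $f\in\mathcal X$, normed by $\|g\|_{\mathcal X'}=\sup\{\int|fg|:\|f\|_{\mathcal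 X}\le1\}$. $M$ bounded on $\mathcal X'$ means $\|Mg\|_{\mathcal X'}\le C\|g\|_{\mathcal X'}$ for all $g\in\mathcal X'$. *)

theory Defs
  imports "HOL-Analysis.Analysis"
begin

definition cubes :: "(real^'n) set set" where
  "cubes = {Q. \<exists>a h. h > 0 \<and> Q = cbox a (a + h *\<^sub>R One)}"

definition maximal :: "(real^'n \<Rightarrow> real) \<Rightarrow> real^'n \<Rightarrow> ennreal" where
  "maximal f x = (SUP Q\<in>{Q\<in>cubes. x \<in> Q}.
      (\<integral>\<^sup>+ y. indicator Q y * ennreal \<bar>f y\<bar> \<partial>lebesgue) / emeasure lebesgue Q)"

definition weight :: "(real^'n \<Rightarrow> real) \<Rightarrow> bool" where
  "weight w \<longleftrightarrow> w \<in> borel_measurable lebesgue \<and> (AE x in lebesgue. w x > 0)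
     \<and> (\<forall>K. compact K \<longrightarrow> set_integrable lebesgue K w)"

definition A1 :: "(real^'n \<Rightarrow> real) set" where
  "A1 = {w. weight w \<and> (\<exists>C::real. AE x in lebesgue. maximal w x \<le> ennreal (C * w x))}"

definition L1w :: "(real^'n \<Rightarrow> real) \<Rightarrow> (real^'n \<Rightarrow> real) set" where
  "L1w w = {f. f \<in> borel_measurable lebesgue \<and>
              (\<integral>\<^sup>+ x. ennreal (\<bar>f x\<bar> * w x) \<partial>lebesgue) < \<infinity>}"

definition banach_function_norm :: "((real^'n \<Rightarrow> ennreal) \<Rightarrow> ennreal) \<Rightarrow> bool" where
  "banach_function_norm \<rho> \<longleftrightarrow>
    (\<forall>f \<in> borel_measurable lebesgue. \<rho> f = 0 \<longleftrightarrow> (AE x in lebesgue. f x = 0)) \<and>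
    (\<forall>f \<in> borel_measurable lebesgue. \<forall>a::real. a > 0 \<longrightarrow> \<rho> (\<lambda>x. ennreal a * f x) = ennreal a * \<rho> f) \<and>
    (\<forall>f \<in> borel_measurable lebesgue. \<forall>g \<in> borel_measurable lebesgue.
        \<rho> (\<lambda>x. f x + g x) \<le> \<rho> f + \<rho> g) \<and>
    (\<forall>f \<in> borel_measurable lebesgue. \<forall>g \<in> borel_measurable lebesgue.
        (AE x in lebesgue. f x \<le> g x) \<longrightarrow> \<rho> f \<le> \<rho> g) \<and>
    (\<forall>F f. (\<forall>k. F k \<in> borel_measurable lebesgue) \<longrightarrow> f \<in> borel_measurable lebesgue \<longrightarrow>
        (AE x in lebesgue. incseq (\<lambda>k. F k x) \<and> (\<lambda>k. F k x) \<longlonglongrightarrow> f x) \<longrightarrow>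
        incseq (\<lambda>k. \<rho> (F k)) \<and> (\<lambda>k. \<rho> (F k)) \<longlonglongrightarrow> \<rho> f) \<and>
    (\<forall>B. B \<in> sets lebesgue \<longrightarrow> bounded B \<longrightarrow> \<rho> (indicator B) < \<infinity>) \<and>
    (\<forall>B. B \<in> sets lebesgue \<longrightarrow> bounded B \<longrightarrow>
        (\<exists>C::real. C > 0 \<and> (\<forall>f \<in> borel_measurable lebesgue.
            (\<integral>\<^sup>+ x. indicator B x * f x \<partial>lebesgue) \<le> ennreal C * \<rho> f)))"

definition BFS :: "((real^'n \<Rightarrow> ennreal) \<Rightarrow> ennreal) \<Rightarrow> (real^'n \<Rightarrow> real) set" where
  "BFS \<rho> = {f. f \<in> borel_measurable lebesgue \<and> \<rho> (\<lambda>x. ennreal \<bar>f x\<bar>) < \<infinity>}"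

definition bfs_norm :: "((real^'n \<Rightarrow> ennreal) \<Rightarrow> ennreal) \<Rightarrow> (real^'n \<Rightarrow> real) \<Rightarrow> ennreal" where
  "bfs_norm \<rho> f = \<rho> (\<lambda>x. ennreal \<bar>f x\<bar>)"

text \<open>Associate space and its norm (the norm is given for nonnegative extended functions h,
  applied to |g| for g in the associate space and to Mg).\<close>
definition assoc_space :: "((real^'n \<Rightarrow> ennreal) \<Rightarrow> ennreal) \<Rightarrow> (real^'n \<Rightarrow> real) set" where
  "assoc_space \<rho> = {g. g \<in> borel_measurable lebesgue \<and>
      (\<forall>f \<in> BFS \<rho>. integrable lebesgue (\<lambda>x. f x * g x))}"

definition assoc_norm :: "((real^'n \<Rightarrow> ennreal) \<Rightarrow> ennreal) \<Rightarrow> (real^'n \<Rightarrow> ennreal) \<Rightarrow> ennreal" where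
  "assoc_norm \<rho> h = (SUP f\<in>{f \<in> BFS \<rho>. bfs_norm \<rho> f \<le> 1}.
       \<integral>\<^sup>+ x. ennreal \<bar>f x\<bar> * h x \<partial>lebesgue)"

definition maximal_bounded_on_assoc :: "((real^'n \<Rightarrow> ennreal) \<Rightarrow> ennreal) \<Rightarrow> bool" where
  "maximal_bounded_on_assoc \<rho> \<longleftrightarrow> (\<exists>C::real. \<forall>g \<in> assoc_space \<rho>.
      assoc_norm \<rho> (maximal g) \<le> ennreal C * assoc_norm \<rho> (\<lambda>x. ennreal \<bar>g x\<bar>))"

end

theory Submission
  imports Defs
begin

text \<open>
  For \<open>w \<in> A\<^sub>1\<close> the weighted norm \<open>\<integral>|f| w\<close> is a Banach function norm with space \<open>L\<^sup>1\<^sub>w\<close>.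
  A function \<open>g\<close> of associate norm less than \<open>t\<close> satisfies \<open>|g| \<le> t w\<close>, hence
  \<open>Mg \<le> t Mw \<le> t C w\<close>, so \<open>M\<close> is bounded on the associate space.
  Conversely, if \<open>M\<close> has norm \<open>C\<close> on \<open>\<X>'\<close>, Rubio de Francia's algorithm
  \<open>R = \<Sum>\<^sub>k (2C)\<^sup>-\<^sup>k M\<^sup>k h\<close>, started from a strictly positive \<open>h \<in> \<X>'\<close>, converges in \<open>\<X>'\<close>
  and satisfies \<open>MR \<le> 2C R\<close>, so \<open>R \<in> \<X>' \<inter> A\<^sub>1\<close>.
  Finally, \<open>w \<in> \<X>'\<close> means exactly that \<open>\<integral>|f| w < \<infinity>\<close> for \<open>f \<in> \<X>\<close>, i.e. \<open>\<X> \<subseteq> L\<^sup>1\<^sub>w\<close>.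
\<close>

lemma ennreal_le_suminf: "(f i :: ennreal) \<le> (\<Sum>i. f i)"
  using sum_le_suminf[OF summableI, of "{i}" f] by simp

lemma ennreal_suminf_Suc_le: "(\<Sum>j. f (Suc j)) \<le> (\<Sum>j. f j :: ennreal)"
proof -
  have "(\<Sum>j. f j) = (\<Sum>j. f (Suc j)) + f 0"
    using suminf_offset[OF summableI, of f 1] by simp
  then show ?thesis by (simp add: add_increasing2)
qed

lemma ennreal_suminf_geometric_half: "(\<Sum>m. ennreal ((1/2) ^ m)) = 2"
proof -
  have "(\<lambda>m. (1/2::real) ^ m) sums 2"
    using geometric_sums[of "1/2::real"] by simp
  then show ?thesis by (subst suminf_ennreal_eq) auto
qed

lemma ennreal_le_mult_if_forall_less:
  assumes "C > 0" and le: "\<And>t. K < ennreal t \<Longrightarrow> X \<le> ennreal (C * t)"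
  shows "X \<le> ennreal C * K"
proof (cases K)
  case (real k)
  show ?thesis
  proof (rule ennreal_le_epsilon)
    fix e :: real assume "0 < e"
    have "X \<le> ennreal (C * (k + e / C))"
      using \<open>0 < e\<close> \<open>C > 0\<close> real by (intro le) (simp add: ennreal_less_iff)
    also have "\<dots> = ennreal C * K + ennreal e"
      using \<open>0 < e\<close> \<open>C > 0\<close> real by (simp add: distrib_left ennreal_mult)
    finally show "X \<le> ennreal C * K + ennreal e" .
  qed
next
  case top
  then show ?thesis using \<open>C > 0\<close> by (simp add: ennreal_mult_top)
qed

subsection \<open>Cubes and the maximal function\<close>

lemma emeasure_cube:
  fixes a :: "real^'n"
  assumes "h > 0"
  shows "emeasure lebesgue (cbox a (a + h *\<^sub>R One)) = ennreal (h ^ CARD('n))"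
proof -
  have "emeasure lebesgue (cbox a (a + h *\<^sub>R One)) = emeasure lborel (cbox a (a + h *\<^sub>R One))"
    by simp
  also have "\<dots> = ennreal (\<Prod>b\<in>(Basis::(real^'n) set). h)"
    using assms by (subst emeasure_lborel_cbox_eq) (auto simp: inner_add_left)
  finally show ?thesis by simp
qed

lemma cube_average_le_maximal:
  fixes a x :: "real^'n"
  assumes "h > 0" "x \<in> cbox a (a + h *\<^sub>R One)"
  shows "(\<integral>\<^sup>+ y. indicator (cbox a (a + h *\<^sub>R One)) y * ennreal \<bar>g y\<bar> \<partial>lebesgue) / ennreal (h ^ CARD('n))
         \<le> maximal g x"
proof -
  have "cbox a (a + h *\<^sub>R One) \<in> {Q\<in>cubes. x \<in> Q}"
    using assms unfolding cubes_def by blast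
  then show ?thesis unfolding maximal_def
    by (rule SUP_upper2) (simp add: emeasure_cube[OF assms(1)])
qed

lemma less_maximalE:
  fixes x :: "real^'n"
  assumes "t < maximal g x"
  obtains a h where "h > 0" "x \<in> cbox a (a + h *\<^sub>R One)"
    "t < (\<integral>\<^sup>+ y. indicator (cbox a (a + h *\<^sub>R One)) y * ennreal \<bar>g y\<bar> \<partial>lebesgue) / ennreal (h ^ CARD('n))"
proof -
  from assms obtain Q where Q: "Q \<in> cubes" "x \<in> Q"
    "t < (\<integral>\<^sup>+ y. indicator Q y * ennreal \<bar>g y\<bar> \<partial>lebesgue) / emeasure lebesgue Q"
    unfolding maximal_def less_SUP_iff by blast
  then obtain a h where "h > 0" "Q = cbox a (a + h *\<^sub>R One)" unfolding cubes_def by blast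
  with Q show ?thesis using that emeasure_cube[of h a] by auto
qed

lemma vec_nth_One: "(One::real^'n) $ i = 1"
proof -
  have "One \<bullet> b = 1" if "b \<in> (Basis::(real^'n) set)" for b
    using that by (simp add: inner_sum_left sum.If_cases inner_Basis)
  then have "One \<bullet> axis i (1::real) = 1" by simp
  then show ?thesis by (simp add: cart_eq_inner_axis)
qed

lemma sum_Basis_vec_nth: "(\<Sum>b\<in>(Basis::(real^'n) set). b $ i) = 1"
  using vec_nth_One[of i] by simp

lemma mem_cube_cart:
  "(y::real^'n) \<in> cbox a (a + h *\<^sub>R One) \<longleftrightarrow> (\<forall>i. a$i \<le> y$i \<and> y$i \<le> a$i + h)"
  unfolding mem_box_cart by (simp add: sum_Basis_vec_nth)

lemma bounded_subset_cube:
  fixes B :: "(real^'n) set"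
  assumes "bounded B"
  obtains a h where "h > 0" "B \<subseteq> cbox a (a + h *\<^sub>R One)"
proof -
  obtain R where R: "\<And>x. x \<in> B \<Longrightarrow> norm x \<le> R" "R > 0"
    using assms bounded_pos by blast
  have "B \<subseteq> cbox ((-R) *\<^sub>R One) ((-R) *\<^sub>R One + (2*R) *\<^sub>R One)"
  proof
    fix x assume "x \<in> B"
    then have "\<bar>x$i\<bar> \<le> R" for i
      using R(1) component_le_norm_cart[of x] by (meson order_trans)
    then have "-R \<le> x$i \<and> x$i \<le> -R + 2 * R" for i
      by (metis abs_le_iff minus_le_iff mult_2 add_minus_cancel add.commute)
    then show "x \<in> cbox ((-R) *\<^sub>R One) ((-R) *\<^sub>R One + (2*R) *\<^sub>R One)"
      unfolding mem_cube_cart by (simp add: sum_Basis_vec_nth)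
  qed
  moreover have "2 * R > 0" using \<open>R > 0\<close> by simp
  ultimately show ?thesis using that by blast
qed

text \<open>Lower semicontinuity of \<open>M\<close>: a slightly enlarged cube still has average above \<open>t\<close>,
  and the margin contains a ball around the point.\<close>

lemma less_divide_power_enlarge:
  assumes "h > 0" and lt: "t < I / ennreal (h ^ n)"
  obtains h' where "h' > h" "t < I / ennreal (h' ^ n)"
proof (cases "I = \<infinity>")
  case True
  have "\<infinity> / ennreal p = \<infinity>" for p by (simp add: ennreal_divide_eq_top_iff)
  then have "t < I / ennreal ((h + 1) ^ n)"
    using lt True by (simp only:)
  then show ?thesis using that[of "h + 1"] by simp
next
  case False
  then obtain i where i: "I = ennreal i" "i \<ge> 0" by (cases I) auto
  have "t < \<infinity>" using lt top.not_eq_extremum by fastforce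
  then obtain t' where t': "t = ennreal t'" "t' \<ge> 0" by (cases t) auto
  have div: "ennreal i / ennreal p = ennreal (i / p)" if "p > 0" for p :: real
    using i that by (intro divide_ennreal) auto
  have "t' < i / h ^ n"
    using lt i t' assms(1) unfolding i t' div[OF zero_less_power[OF assms(1)]]
    by (subst (asm) ennreal_less_iff) auto
  then have "t' * h ^ n < i" using assms(1) by (simp add: field_simps)
  moreover have "((\<lambda>s. t' * s ^ n) \<longlongrightarrow> t' * h ^ n) (at_right h)"
    by (intro tendsto_intros)
  ultimately have "eventually (\<lambda>s. t' * s ^ n < i) (at_right h)"
    by (rule order_tendstoD(2)[rotated])
  then obtain b where b: "b > h" "\<And>s. h < s \<Longrightarrow> s < b \<Longrightarrow> t' * s ^ n < i"
    unfolding eventually_at_right_field by blast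
  define h' where "h' = (h + b) / 2"
  have "h' > h" "t' * h' ^ n < i" using b unfolding h'_def by auto
  then have "t' < i / h' ^ n" using assms(1) by (simp add: field_simps)
  then have "t < I / ennreal (h' ^ n)"
    unfolding i t' using i t' \<open>h' > h\<close> assms(1) by (subst div) (auto simp: ennreal_less_iff)
  with \<open>h' > h\<close> show ?thesis by (rule that)
qed

lemma open_maximal_superlevel: "open {x::real^'n. t < maximal g x}"
proof (rule openI)
  fix x :: "real^'n" assume "x \<in> {x. t < maximal g x}"
  then have "t < maximal g x" by simp
  then obtain a h where ah: "h > 0" "x \<in> cbox a (a + h *\<^sub>R One)"
    "t < (\<integral>\<^sup>+ y. indicator (cbox a (a + h *\<^sub>R One)) y * ennreal \<bar>g y\<bar> \<partial>lebesgue) / ennreal (h ^ CARD('n))"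
    by (rule less_maximalE)
  obtain h' where h': "h' > h"
    "t < (\<integral>\<^sup>+ y. indicator (cbox a (a + h *\<^sub>R One)) y * ennreal \<bar>g y\<bar> \<partial>lebesgue) / ennreal (h' ^ CARD('n))"
    by (rule less_divide_power_enlarge[OF ah(1) ah(3)])
  define d where "d = (h' - h) / 2"
  define a' where "a' = a - d *\<^sub>R One"
  have d: "d > 0" "h' = h + 2 * d" "h' > 0" using h'(1) ah(1) by (auto simp: d_def field_simps)
  have x: "a$i \<le> x$i \<and> x$i \<le> a$i + h" for i
    using ah(2) mem_cube_cart by blast
  have in_cube: "y \<in> cbox a' (a' + h' *\<^sub>R One)" if "\<And>i. a$i - d \<le> y$i \<and> y$i \<le> a$i + h + d" for y
  proof -
    have "a$i - d \<le> y$i \<and> y$i \<le> a$i - d + h'" for i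
      using that[of i] d(2) by auto
    then show ?thesis unfolding mem_cube_cart a'_def by (simp add: sum_Basis_vec_nth)
  qed
  have "cbox a (a + h *\<^sub>R One) \<subseteq> cbox a' (a' + h' *\<^sub>R One)"
  proof
    fix y assume "y \<in> cbox a (a + h *\<^sub>R One)"
    then have y: "a$i \<le> y$i \<and> y$i \<le> a$i + h" for i using mem_cube_cart by blast
    have "a$i - d \<le> y$i \<and> y$i \<le> a$i + h + d" for i using y[of i] \<open>d > 0\<close> by linarith
    then show "y \<in> cbox a' (a' + h' *\<^sub>R One)" by (rule in_cube)
  qed
  then have "(\<integral>\<^sup>+ y. indicator (cbox a (a + h *\<^sub>R One)) y * ennreal \<bar>g y\<bar> \<partial>lebesgue)
      \<le> (\<integral>\<^sup>+ y. indicator (cbox a' (a' + h' *\<^sub>R One)) y * ennreal \<bar>g y\<bar> \<partial>lebesgue)"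
    by (intro nn_integral_mono) (auto split: split_indicator)
  then have avg: "t < (\<integral>\<^sup>+ y. indicator (cbox a' (a' + h' *\<^sub>R One)) y * ennreal \<bar>g y\<bar> \<partial>lebesgue)
      / ennreal (h' ^ CARD('n))"
    using h'(2) by (meson divide_right_mono_ennreal order_less_le_trans)
  have "t < maximal g y" if "y \<in> ball x d" for y
  proof -
    have yx: "\<bar>y$i - x$i\<bar> \<le> d" for i
      using that component_le_norm_cart[of "y - x" i] by (simp add: dist_norm norm_minus_commute)
    have "a$i - d \<le> y$i \<and> y$i \<le> a$i + h + d" for i
      using yx[of i] x[of i] unfolding abs_le_iff by linarith
    then have "y \<in> cbox a' (a' + h' *\<^sub>R One)" by (rule in_cube)
    from avg cube_average_le_maximal[OF d(3) this] show ?thesis by (rule order_less_le_trans)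
  qed
  with \<open>d > 0\<close> show "\<exists>e>0. ball x e \<subseteq> {x. t < maximal g x}" by blast
qed

lemma borel_measurable_maximal [measurable]: "maximal (g::real^'n\<Rightarrow>real) \<in> borel_measurable lebesgue"
proof (rule borel_measurableI_greater)
  fix t
  have "open {x::real^'n. t < maximal g x}" by (rule open_maximal_superlevel)
  then show "{x \<in> space lebesgue. t < maximal g x} \<in> sets lebesgue" by simp
qed

lemma maximal_le_scaled:
  fixes g w :: "real^'n \<Rightarrow> real"
  assumes [measurable]: "w \<in> borel_measurable lebesgue" and "c \<ge> 0"
    and le: "AE x in lebesgue. \<bar>g x\<bar> \<le> c * \<bar>w x\<bar>"
  shows "maximal g x \<le> ennreal c * maximal w x"
  unfolding maximal_def[of g]
proof (rule SUP_least)
  fix Q assume Q: "Q \<in> {Q\<in>cubes. x \<in> Q}"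
  then have [measurable]: "Q \<in> sets lebesgue" unfolding cubes_def by auto
  have "(\<integral>\<^sup>+ y. indicator Q y * ennreal \<bar>g y\<bar> \<partial>lebesgue)
      \<le> (\<integral>\<^sup>+ y. ennreal c * (indicator Q y * ennreal \<bar>w y\<bar>) \<partial>lebesgue)"
    using le
  proof (intro nn_integral_mono_AE, eventually_elim)
    case (elim y)
    then have "ennreal \<bar>g y\<bar> \<le> ennreal c * ennreal \<bar>w y\<bar>"
      using \<open>c \<ge> 0\<close> by (simp add: ennreal_mult[symmetric] ennreal_leI)
    then show ?case by (auto split: split_indicator)
  qed
  also have "\<dots> = ennreal c * (\<integral>\<^sup>+ y. indicator Q y * ennreal \<bar>w y\<bar> \<partial>lebesgue)"
    by (rule nn_integral_cmult) measurable
  finally have "(\<integral>\<^sup>+ y. indicator Q y * ennreal \<bar>g y\<bar> \<partial>lebesgue) / emeasure lebesgue Q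
      \<le> ennreal c * ((\<integral>\<^sup>+ y. indicator Q y * ennreal \<bar>w y\<bar> \<partial>lebesgue) / emeasure lebesgue Q)"
    unfolding ennreal_times_divide by (rule divide_right_mono_ennreal)
  also have "\<dots> \<le> ennreal c * maximal w x"
    using Q unfolding maximal_def by (intro mult_left_mono SUP_upper) auto
  finally show "(\<integral>\<^sup>+ y. indicator Q y * ennreal \<bar>g y\<bar> \<partial>lebesgue) / emeasure lebesgue Q
      \<le> ennreal c * maximal w x" .
qed

lemma maximal_suminf_le:
  fixes f :: "real^'n \<Rightarrow> real" and g :: "nat \<Rightarrow> real^'n \<Rightarrow> real"
  assumes [measurable]: "\<And>k. g k \<in> borel_measurable lebesgue"
    and le: "AE y in lebesgue. ennreal \<bar>f y\<bar> \<le> (\<Sum>k. ennreal \<bar>g k y\<bar>)"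
  shows "maximal f x \<le> (\<Sum>k. maximal (g k) x)"
  unfolding maximal_def[of f]
proof (rule SUP_least)
  fix Q assume Q: "Q \<in> {Q\<in>cubes. x \<in> Q}"
  then have [measurable]: "Q \<in> sets lebesgue" unfolding cubes_def by auto
  have "(\<integral>\<^sup>+ y. indicator Q y * ennreal \<bar>f y\<bar> \<partial>lebesgue)
      \<le> (\<integral>\<^sup>+ y. (\<Sum>k. indicator Q y * ennreal \<bar>g k y\<bar>) \<partial>lebesgue)"
    using le
  proof (intro nn_integral_mono_AE, eventually_elim)
    case (elim y)
    then show ?case by (simp add: mult_left_mono)
  qed
  also have "\<dots> = (\<Sum>k. \<integral>\<^sup>+ y. indicator Q y * ennreal \<bar>g k y\<bar> \<partial>lebesgue)"
    by (rule nn_integral_suminf) measurable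
  finally have "(\<integral>\<^sup>+ y. indicator Q y * ennreal \<bar>f y\<bar> \<partial>lebesgue) / emeasure lebesgue Q
      \<le> (\<Sum>k. \<integral>\<^sup>+ y. indicator Q y * ennreal \<bar>g k y\<bar> \<partial>lebesgue) / emeasure lebesgue Q"
    by (rule divide_right_mono_ennreal)
  also have "\<dots> = (\<Sum>k. (\<integral>\<^sup>+ y. indicator Q y * ennreal \<bar>g k y\<bar> \<partial>lebesgue) / emeasure lebesgue Q)"
    by simp
  also have "\<dots> \<le> (\<Sum>k. maximal (g k) x)"
    using Q unfolding maximal_def by (intro suminf_le summableI SUP_upper) simp_all
  finally show "(\<integral>\<^sup>+ y. indicator Q y * ennreal \<bar>f y\<bar> \<partial>lebesgue) / emeasure lebesgue Q
      \<le> (\<Sum>k. maximal (g k) x)" .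
qed

subsection \<open>Weights and \<open>A\<^sub>1\<close>\<close>

lemma weight_nn_integral_compact_finite:
  assumes "weight w" "compact K"
  shows "(\<integral>\<^sup>+ x. indicator K x * ennreal \<bar>w x\<bar> \<partial>lebesgue) < \<infinity>"
proof -
  have "set_integrable lebesgue K w" using assms unfolding weight_def by blast
  then have "(\<integral>\<^sup>+ x. ennreal (norm (indicator K x *\<^sub>R w x)) \<partial>lebesgue) < \<infinity>"
    unfolding set_integrable_def integrable_iff_bounded by blast
  moreover have "(\<integral>\<^sup>+ x. ennreal (norm (indicator K x *\<^sub>R w x)) \<partial>lebesgue)
      = (\<integral>\<^sup>+ x. indicator K x * ennreal \<bar>w x\<bar> \<partial>lebesgue)"
    by (intro nn_integral_cong) (auto split: split_indicator)
  ultimately show ?thesis by simp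
qed

lemma weight_nn_integral_pos:
  assumes "weight w" and [measurable]: "E \<in> sets lebesgue" and "emeasure lebesgue E \<noteq> 0"
  shows "(\<integral>\<^sup>+ x. indicator E x * ennreal (w x) \<partial>lebesgue) \<noteq> 0"
proof
  have [measurable]: "w \<in> borel_measurable lebesgue" and pos: "AE x in lebesgue. w x > 0"
    using assms(1) unfolding weight_def by auto
  assume "(\<integral>\<^sup>+ x. indicator E x * ennreal (w x) \<partial>lebesgue) = 0"
  then have "AE x in lebesgue. indicator E x * ennreal (w x) = 0"
    by (subst (asm) nn_integral_0_iff_AE) auto
  with pos have "AE x in lebesgue. x \<notin> E"
    by eventually_elim (auto split: split_indicator)
  then have "E \<in> null_sets lebesgue" by (simp add: AE_iff_null_sets)
  with assms(3) show False by auto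
qed

lemma weight_positive_finite_part:
  fixes w :: "real^'n \<Rightarrow> real"
  assumes "weight w" and [measurable]: "E \<in> sets lebesgue" and "emeasure lebesgue E \<noteq> 0"
  obtains E' c where "E' \<subseteq> E" "E' \<in> sets lebesgue" "c > 0"
    "(\<integral>\<^sup>+ x. indicator E' x * ennreal (w x) \<partial>lebesgue) = ennreal c"
proof -
  have E: "E = (\<Union>m::nat. E \<inter> ball 0 (real m))"
    by (auto, meson mem_ball_0 reals_Archimedean2)
  have "\<exists>m::nat. emeasure lebesgue (E \<inter> ball 0 (real m)) \<noteq> 0"
  proof (rule ccontr)
    assume "\<not> ?thesis"
    then have "emeasure lebesgue (\<Union>m::nat. E \<inter> ball 0 (real m)) = 0"
      by (intro emeasure_UN_eq_0) auto
    with E assms(3) show False by simp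
  qed
  then obtain m :: nat where m: "emeasure lebesgue (E \<inter> ball 0 (real m)) \<noteq> 0" by blast
  define E' where "E' = E \<inter> ball 0 (real m)"
  have E'm [measurable]: "E' \<in> sets lebesgue" unfolding E'_def by (intro sets.Int) auto
  let ?I = "\<integral>\<^sup>+ x. indicator E' x * ennreal (w x) \<partial>lebesgue"
  have "emeasure lebesgue E' \<noteq> 0" using m unfolding E'_def .
  then have "?I \<noteq> 0" by (rule weight_nn_integral_pos[OF assms(1) E'm])
  moreover have "?I \<le> (\<integral>\<^sup>+ x. indicator (cball 0 (real m)) x * ennreal \<bar>w x\<bar> \<partial>lebesgue)"
    unfolding E'_def by (intro nn_integral_mono) (auto split: split_indicator intro: ennreal_leI)
  then have "?I < \<infinity>"
    using weight_nn_integral_compact_finite[OF assms(1), of "cball 0 (real m)"] by simp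
  ultimately obtain c where "?I = ennreal c" "c > 0"
    by (cases ?I) (auto simp: top.not_eq_extremum)
  then show ?thesis using that[of E' c] E'm unfolding E'_def by blast
qed

lemma A1_weight: "w \<in> A1 \<Longrightarrow> weight w"
  unfolding A1_def by blast

lemma A1_constant:
  assumes "w \<in> A1"
  obtains C where "C \<ge> 1" "AE x in lebesgue. maximal w x \<le> ennreal (C * w x)"
proof -
  obtain C0 where C0: "AE x in lebesgue. maximal w x \<le> ennreal (C0 * w x)"
    using assms unfolding A1_def by blast
  have "AE x in lebesgue. w x > 0" using A1_weight[OF assms] unfolding weight_def by blast
  with C0 have "AE x in lebesgue. maximal w x \<le> ennreal (max C0 1 * w x)"
    by eventually_elim (erule order_trans, auto intro!: ennreal_leI mult_right_mono)
  then show ?thesis using that[of "max C0 1"] by auto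
qed

text \<open>An \<open>A\<^sub>1\<close> weight dominates its averages, which are positive on every cube.\<close>

lemma A1_bounded_below:
  fixes w :: "real^'n \<Rightarrow> real"
  assumes "w \<in> A1" "bounded B"
  obtains c where "c > 0" "AE x in lebesgue. x \<in> B \<longrightarrow> c \<le> w x"
proof -
  have wt: "weight w" by (rule A1_weight[OF assms(1)])
  obtain a h where ah: "h > 0" "B \<subseteq> cbox a (a + h *\<^sub>R One)"
    using bounded_subset_cube[OF assms(2)] by blast
  let ?Q = "cbox a (a + h *\<^sub>R One)"
  define J where "J = (\<integral>\<^sup>+ x. indicator ?Q x * ennreal \<bar>w x\<bar> \<partial>lebesgue)"
  have "J < \<infinity>" unfolding J_def by (rule weight_nn_integral_compact_finite[OF wt]) simp
  moreover have "(\<integral>\<^sup>+ x. indicator ?Q x * ennreal (w x) \<partial>lebesgue) \<le> J"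
    unfolding J_def by (intro nn_integral_mono mult_left_mono ennreal_leI) auto
  then have "J \<noteq> 0"
    using weight_nn_integral_pos[OF wt, of ?Q] emeasure_cube[OF ah(1), of a] ah(1) by auto
  ultimately obtain j where j: "J = ennreal j" "j > 0"
    by (cases J) (auto simp: top.not_eq_extremum)
  define c0 where "c0 = j / h ^ CARD('n)"
  have c0: "c0 > 0" unfolding c0_def using j ah(1) by simp
  have avg: "J / ennreal (h ^ CARD('n)) = ennreal c0"
    unfolding j c0_def using j ah(1) by (intro divide_ennreal) auto
  obtain C where C: "C \<ge> 1" "AE x in lebesgue. maximal w x \<le> ennreal (C * w x)"
    by (rule A1_constant[OF assms(1)])
  from C(2) have "AE x in lebesgue. x \<in> B \<longrightarrow> c0 / C \<le> w x"
  proof eventually_elim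
    case (elim x)
    show ?case
    proof
      assume "x \<in> B"
      then have "ennreal c0 \<le> maximal w x"
        using cube_average_le_maximal[OF ah(1), of x a w] ah(2) unfolding J_def[symmetric] avg by blast
      with elim have "ennreal c0 \<le> ennreal (C * w x)" by (meson order_trans)
      then have "c0 \<le> C * w x" using c0 by (metis ennreal_le_iff2 not_le order_less_le_trans)
      then show "c0 / C \<le> w x" using C(1) by (simp add: field_simps)
    qed
  qed
  moreover have "c0 / C > 0" using c0 C(1) by simp
  ultimately show ?thesis using that by blast
qed

subsection \<open>Banach function norms and associate spaces\<close>

lemma banach_function_norm_eq_0_iff:
  "banach_function_norm \<rho> \<Longrightarrow> f \<in> borel_measurable lebesgue \<Longrightarrow> \<rho> f = 0 \<longleftrightarrow> (AE x in lebesgue. f x = 0)"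
  unfolding banach_function_norm_def by (drule conjunct1) (erule bspec)

lemma banach_function_norm_cmult:
  "banach_function_norm \<rho> \<Longrightarrow> f \<in> borel_measurable lebesgue \<Longrightarrow> a > 0 \<Longrightarrow>
    \<rho> (\<lambda>x. ennreal a * f x) = ennreal a * \<rho> f"
  unfolding banach_function_norm_def
  by (drule conjunct2, drule conjunct1, drule bspec, assumption, erule allE, erule mp)

lemma banach_function_norm_indicator_finite:
  assumes "banach_function_norm \<rho>" "B \<in> sets lebesgue" "bounded B"
  shows "\<rho> (indicator B) < \<infinity>"
proof -
  have "\<forall>B. B \<in> sets lebesgue \<longrightarrow> bounded B \<longrightarrow> \<rho> (indicator B) < \<infinity>"
    using assms(1) unfolding banach_function_norm_def by (elim conjE) assumption
  then show ?thesis using assms(2,3) by blast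
qed

lemma banach_function_norm_local_integral_le:
  assumes "banach_function_norm \<rho>" "B \<in> sets lebesgue" "bounded B"
  shows "\<exists>C>0. \<forall>f \<in> borel_measurable lebesgue.
      (\<integral>\<^sup>+ x. indicator B x * f x \<partial>lebesgue) \<le> ennreal C * \<rho> f"
proof -
  have "\<forall>B. B \<in> sets lebesgue \<longrightarrow> bounded B \<longrightarrow> (\<exists>C>0. \<forall>f \<in> borel_measurable lebesgue.
      (\<integral>\<^sup>+ x. indicator B x * f x \<partial>lebesgue) \<le> ennreal C * \<rho> f)"
    using assms(1) unfolding banach_function_norm_def by (elim conjE) assumption
  then show ?thesis using assms(2,3) by blast
qed

lemma indicator_in_BFS:
  assumes "banach_function_norm \<rho>" "B \<in> sets lebesgue" "bounded B"
  shows "(\<lambda>x. indicator B x :: real) \<in> BFS \<rho>"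
proof -
  have "(\<lambda>x. ennreal \<bar>indicator B x :: real\<bar>) = indicator B"
    by (auto split: split_indicator)
  then show ?thesis
    unfolding BFS_def using banach_function_norm_indicator_finite[OF assms] assms(2) by auto
qed

lemma nn_integral_le_assoc_norm_mult:
  assumes bfn: "banach_function_norm \<rho>" and f: "f \<in> BFS \<rho>" and [measurable]: "h \<in> borel_measurable lebesgue"
  shows "(\<integral>\<^sup>+ x. ennreal \<bar>f x\<bar> * h x \<partial>lebesgue) \<le> assoc_norm \<rho> h * \<rho> (\<lambda>x. ennreal \<bar>f x\<bar>)"
proof -
  have [measurable]: "f \<in> borel_measurable lebesgue" and fin: "\<rho> (\<lambda>x. ennreal \<bar>f x\<bar>) < \<infinity>"
    using f unfolding BFS_def by auto
  show ?thesis
  proof (cases "\<rho> (\<lambda>x. ennreal \<bar>f x\<bar>) = 0")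
    case True
    then have "AE x in lebesgue. ennreal \<bar>f x\<bar> = 0"
      using banach_function_norm_eq_0_iff[OF bfn, of "\<lambda>x. ennreal \<bar>f x\<bar>"] by simp
    then have "(\<integral>\<^sup>+ x. ennreal \<bar>f x\<bar> * h x \<partial>lebesgue) = 0"
      by (subst nn_integral_0_iff_AE) (auto elim!: AE_mp)
    then show ?thesis by simp
  next
    case False
    then obtain r where r: "\<rho> (\<lambda>x. ennreal \<bar>f x\<bar>) = ennreal r" "r > 0"
      using fin by (cases "\<rho> (\<lambda>x. ennreal \<bar>f x\<bar>)") (auto simp: top.not_eq_extremum)
    define f' where "f' x = f x / r" for x
    have f: "ennreal \<bar>f x\<bar> = ennreal r * ennreal \<bar>f' x\<bar>" for x
      using r(2) by (simp add: f'_def ennreal_mult'[symmetric])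
    have "\<rho> (\<lambda>x. ennreal \<bar>f' x\<bar>) = ennreal (1/r) * \<rho> (\<lambda>x. ennreal \<bar>f x\<bar>)"
      using r(2) by (subst banach_function_norm_cmult[OF bfn, symmetric])
        (auto simp: f'_def ennreal_mult'[symmetric])
    also have "\<dots> = 1" using r by (simp add: ennreal_mult[symmetric])
    finally have "f' \<in> {f \<in> BFS \<rho>. bfs_norm \<rho> f \<le> 1}"
      unfolding BFS_def bfs_norm_def f'_def[abs_def] by auto
    then have le: "(\<integral>\<^sup>+ x. ennreal \<bar>f' x\<bar> * h x \<partial>lebesgue) \<le> assoc_norm \<rho> h"
      unfolding assoc_norm_def by (rule SUP_upper)
    have "(\<integral>\<^sup>+ x. ennreal \<bar>f x\<bar> * h x \<partial>lebesgue) = ennreal r * (\<integral>\<^sup>+ x. ennreal \<bar>f' x\<bar> * h x \<partial>lebesgue)"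
      unfolding f by (subst nn_integral_cmult[symmetric]) (auto simp: f'_def mult.assoc)
    also have "\<dots> \<le> ennreal r * assoc_norm \<rho> h" by (intro mult_left_mono le) auto
    finally show ?thesis unfolding r(1) by (simp add: ac_simps)
  qed
qed

lemma assoc_norm_mono:
  assumes "\<And>x. h1 x \<le> h2 x"
  shows "assoc_norm \<rho> h1 \<le> assoc_norm \<rho> h2"
  unfolding assoc_norm_def
  by (intro SUP_mono) (auto intro!: nn_integral_mono mult_left_mono assms)

lemma assoc_norm_suminf_le:
  assumes [measurable]: "\<And>k. h k \<in> borel_measurable lebesgue"
  shows "assoc_norm \<rho> (\<lambda>x. \<Sum>k. c k * h k x) \<le> (\<Sum>k. c k * assoc_norm \<rho> (h k))"
  unfolding assoc_norm_def[of \<rho> "\<lambda>x. \<Sum>k. c k * h k x"]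
proof (rule SUP_least)
  fix f assume f: "f \<in> {f \<in> BFS \<rho>. bfs_norm \<rho> f \<le> 1}"
  then have [measurable]: "f \<in> borel_measurable lebesgue" unfolding BFS_def by blast
  have "(\<integral>\<^sup>+ x. ennreal \<bar>f x\<bar> * (\<Sum>k. c k * h k x) \<partial>lebesgue)
      = (\<integral>\<^sup>+ x. (\<Sum>k. c k * (ennreal \<bar>f x\<bar> * h k x)) \<partial>lebesgue)"
    by (intro nn_integral_cong) (simp add: ennreal_suminf_cmult[symmetric] ac_simps)
  also have "\<dots> = (\<Sum>k. \<integral>\<^sup>+ x. c k * (ennreal \<bar>f x\<bar> * h k x) \<partial>lebesgue)"
    by (rule nn_integral_suminf) measurable
  also have "\<dots> = (\<Sum>k. c k * \<integral>\<^sup>+ x. ennreal \<bar>f x\<bar> * h k x \<partial>lebesgue)"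
    by (simp add: nn_integral_cmult)
  also have "\<dots> \<le> (\<Sum>k. c k * assoc_norm \<rho> (h k))"
    using f unfolding assoc_norm_def by (intro suminf_le summableI mult_left_mono SUP_upper) auto
  finally show "(\<integral>\<^sup>+ x. ennreal \<bar>f x\<bar> * (\<Sum>k. c k * h k x) \<partial>lebesgue) \<le> (\<Sum>k. c k * assoc_norm \<rho> (h k))" .
qed

lemma assoc_norm_indicator_finite:
  assumes "banach_function_norm \<rho>" "B \<in> sets lebesgue" "bounded B"
  shows "assoc_norm \<rho> (indicator B) < \<infinity>"
proof -
  obtain C where C: "\<And>f. f \<in> borel_measurable lebesgue \<Longrightarrow>
      (\<integral>\<^sup>+ x. indicator B x * f x \<partial>lebesgue) \<le> ennreal C * \<rho> f"
    using banach_function_norm_local_integral_le[OF assms] by blast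
  have "assoc_norm \<rho> (indicator B) \<le> ennreal C"
    unfolding assoc_norm_def
  proof (rule SUP_least)
    fix f assume "f \<in> {f \<in> BFS \<rho>. bfs_norm \<rho> f \<le> 1}"
    then have [measurable]: "f \<in> borel_measurable lebesgue" and "\<rho> (\<lambda>x. ennreal \<bar>f x\<bar>) \<le> 1"
      unfolding BFS_def bfs_norm_def by auto
    have "(\<integral>\<^sup>+ x. ennreal \<bar>f x\<bar> * indicator B x \<partial>lebesgue) = (\<integral>\<^sup>+ x. indicator B x * ennreal \<bar>f x\<bar> \<partial>lebesgue)"
      by (simp add: mult.commute)
    also have "\<dots> \<le> ennreal C * \<rho> (\<lambda>x. ennreal \<bar>f x\<bar>)" by (rule C) measurable
    also have "\<dots> \<le> ennreal C * 1" using \<open>\<rho> (\<lambda>x. ennreal \<bar>f x\<bar>) \<le> 1\<close> by (intro mult_left_mono) auto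
    finally show "(\<integral>\<^sup>+ x. ennreal \<bar>f x\<bar> * indicator B x \<partial>lebesgue) \<le> ennreal C" by simp
  qed
  then show ?thesis using le_less_trans by fastforce
qed

lemma enn2real_in_assoc_space:
  assumes bfn: "banach_function_norm \<rho>" and [measurable]: "h \<in> borel_measurable lebesgue"
    and fin: "assoc_norm \<rho> h < \<infinity>"
  shows "(\<lambda>x. enn2real (h x)) \<in> assoc_space \<rho>"
  unfolding assoc_space_def
proof (intro CollectI conjI ballI)
  show "(\<lambda>x. enn2real (h x)) \<in> borel_measurable lebesgue" by measurable
  fix f assume f: "f \<in> BFS \<rho>"
  then have [measurable]: "f \<in> borel_measurable lebesgue" unfolding BFS_def by auto
  have "(\<integral>\<^sup>+ x. ennreal (norm (f x * enn2real (h x))) \<partial>lebesgue) \<le> (\<integral>\<^sup>+ x. ennreal \<bar>f x\<bar> * h x \<partial>lebesgue)"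
    by (intro nn_integral_mono) (simp add: abs_mult ennreal_mult mult_left_mono ennreal_enn2real_if)
  also have "\<dots> \<le> assoc_norm \<rho> h * \<rho> (\<lambda>x. ennreal \<bar>f x\<bar>)"
    by (rule nn_integral_le_assoc_norm_mult[OF bfn f]) measurable
  also have "\<dots> < \<infinity>" using fin f unfolding BFS_def by (simp add: ennreal_mult_less_top)
  finally show "integrable lebesgue (\<lambda>x. f x * enn2real (h x))"
    unfolding integrable_iff_bounded by simp
qed

lemma AE_finite_if_assoc_norm_finite:
  fixes h :: "real^'n \<Rightarrow> ennreal"
  assumes bfn: "banach_function_norm \<rho>" and [measurable]: "h \<in> borel_measurable lebesgue"
    and fin: "assoc_norm \<rho> h < \<infinity>"
  shows "AE x in lebesgue. h x \<noteq> \<infinity>"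
proof -
  have "AE x in lebesgue. x \<in> ball 0 (real m) \<longrightarrow> h x \<noteq> \<infinity>" for m :: nat
  proof -
    let ?B = "ball (0::real^'n) (real m)"
    have B[measurable]: "?B \<in> sets lebesgue" and "bounded ?B" by auto
    note ind = indicator_in_BFS[OF bfn this]
    have "(\<integral>\<^sup>+ x. ennreal \<bar>indicator ?B x :: real\<bar> * h x \<partial>lebesgue) \<le> assoc_norm \<rho> h * \<rho> (\<lambda>x. ennreal \<bar>indicator ?B x :: real\<bar>)"
      by (rule nn_integral_le_assoc_norm_mult[OF bfn ind]) measurable
    also have "\<dots> < \<infinity>" using fin ind unfolding BFS_def by (simp add: ennreal_mult_less_top)
    finally have "AE x in lebesgue. ennreal \<bar>indicator ?B x :: real\<bar> * h x \<noteq> \<infinity>"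
      by (intro nn_integral_noteq_infinite) auto
    then show ?thesis by eventually_elim (auto split: split_indicator)
  qed
  then have "AE x in lebesgue. \<forall>m::nat. x \<in> ball 0 (real m) \<longrightarrow> h x \<noteq> \<infinity>"
    by (subst AE_all_countable) blast
  then show ?thesis by eventually_elim (meson mem_ball_0 reals_Archimedean2)
qed

lemma assoc_space_set_integrable:
  assumes bfn: "banach_function_norm \<rho>" and "g \<in> assoc_space \<rho>" "compact K"
  shows "set_integrable lebesgue K g"
proof -
  have "closed K" "bounded K"
    using \<open>compact K\<close> by (auto intro: compact_imp_closed compact_imp_bounded)
  then have "K \<in> sets lebesgue" "bounded K" by auto
  then have "integrable lebesgue (\<lambda>x. indicator K x * g x)"
    using assms(2) indicator_in_BFS[OF bfn] unfolding assoc_space_def by blast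
  then show ?thesis unfolding set_integrable_def by simp
qed

lemma exists_positive_assoc_norm_le:
  assumes bfn: "banach_function_norm \<rho>"
  obtains h :: "real^'n \<Rightarrow> ennreal"
  where "h \<in> borel_measurable lebesgue" "\<And>x. h x > 0" "assoc_norm \<rho> h \<le> 2"
proof -
  define B where "B m = ball (0::real^'n) (real (Suc m))" for m
  have [measurable]: "B m \<in> sets lebesgue" for m unfolding B_def by simp
  define a where "a m = enn2real (assoc_norm \<rho> (indicator (B m)))" for m
  have a: "assoc_norm \<rho> (indicator (B m)) = ennreal (a m)" "a m \<ge> 0" for m
    using assoc_norm_indicator_finite[OF bfn, of "B m"] unfolding a_def B_def
    by (auto simp: ennreal_enn2real_if)
  define c where "c m = (1/2) ^ m / (1 + a m)" for m
  have c: "c m > 0" "c m * a m \<le> (1/2) ^ m" for m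
  proof -
    have "1 + a m > 0" "a m / (1 + a m) \<le> 1" using a(2)[of m] by (auto simp: divide_le_eq)
    then show "c m > 0" by (simp add: c_def)
    have "c m * a m = (1/2) ^ m * (a m / (1 + a m))" by (simp add: c_def)
    also have "\<dots> \<le> (1/2) ^ m" using \<open>a m / (1 + a m) \<le> 1\<close> by (intro mult_left_le) auto
    finally show "c m * a m \<le> (1/2) ^ m" .
  qed
  define h where "h x = (\<Sum>m. ennreal (c m) * indicator (B m) x)" for x
  show ?thesis
  proof
    show "h \<in> borel_measurable lebesgue" unfolding h_def by measurable
  next
    fix x :: "real^'n"
    obtain m :: nat where "norm x < real m" using reals_Archimedean2 by blast
    then have "0 < ennreal (c m) * indicator (B m) x" using c(1)[of m] by (simp add: B_def)
    also have "\<dots> \<le> h x" unfolding h_def by (rule ennreal_le_suminf)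
    finally show "h x > 0" .
  next
    have "assoc_norm \<rho> h \<le> (\<Sum>m. ennreal (c m) * assoc_norm \<rho> (indicator (B m)))"
      unfolding h_def by (rule assoc_norm_suminf_le) measurable
    also have "\<dots> \<le> (\<Sum>m. ennreal ((1/2) ^ m))"
      using c a by (intro suminf_le summableI) (simp add: less_imp_le ennreal_mult[symmetric] ennreal_leI)
    finally show "assoc_norm \<rho> h \<le> 2" by (simp only: ennreal_suminf_geometric_half)
  qed
qed

subsection \<open>The weighted norm of \<open>L\<^sup>1\<^sub>w\<close>\<close>

definition weighted_L1_norm :: "(real^'n \<Rightarrow> real) \<Rightarrow> (real^'n \<Rightarrow> ennreal) \<Rightarrow> ennreal" where
  "weighted_L1_norm w f = (\<integral>\<^sup>+ x. f x * ennreal (w x) \<partial>lebesgue)"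

lemma BFS_weighted_L1_norm: "BFS (weighted_L1_norm w) = L1w w"
  unfolding BFS_def L1w_def weighted_L1_norm_def by (simp add: ennreal_mult')

lemma weighted_L1_norm_monotone_convergence:
  assumes [measurable]: "w \<in> borel_measurable lebesgue" "\<And>k. F k \<in> borel_measurable lebesgue"
    and ae: "AE x in lebesgue. incseq (\<lambda>k. F k x) \<and> (\<lambda>k. F k x) \<longlonglongrightarrow> f x"
  shows "incseq (\<lambda>k. weighted_L1_norm w (F k)) \<and> (\<lambda>k. weighted_L1_norm w (F k)) \<longlonglongrightarrow> weighted_L1_norm w f"
proof
  have mono: "AE x in lebesgue. incseq (\<lambda>k. F k x * ennreal (w x))"
    using ae by eventually_elim (auto simp: incseq_def intro: mult_right_mono)
  then show inc: "incseq (\<lambda>k. weighted_L1_norm w (F k))"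
    unfolding weighted_L1_norm_def incseq_def by (auto intro!: nn_integral_mono_AE elim!: AE_mp)
  have "(SUP k. weighted_L1_norm w (F k)) = (\<integral>\<^sup>+ x. (SUP k. F k x * ennreal (w x)) \<partial>lebesgue)"
    unfolding weighted_L1_norm_def using mono
    by (intro nn_integral_monotone_convergence_SUP_AE[symmetric]) (auto elim!: AE_mp dest: incseq_SucD)
  also have "\<dots> = weighted_L1_norm w f"
    unfolding weighted_L1_norm_def using ae
  proof (intro nn_integral_cong_AE, eventually_elim)
    case (elim x)
    then have "(SUP k. F k x) = f x" using LIMSEQ_unique LIMSEQ_SUP by blast
    then show ?case by (simp add: SUP_mult_right_ennreal[symmetric])
  qed
  finally show "(\<lambda>k. weighted_L1_norm w (F k)) \<longlonglongrightarrow> weighted_L1_norm w f"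
    using LIMSEQ_SUP[OF inc] by simp
qed

lemma weighted_L1_norm_local_integral_le:
  assumes [measurable]: "w \<in> borel_measurable lebesgue" "f \<in> borel_measurable lebesgue"
    and "c > 0" and lower: "AE x in lebesgue. x \<in> B \<longrightarrow> c \<le> w x"
  shows "(\<integral>\<^sup>+ x. indicator B x * f x \<partial>lebesgue) \<le> ennreal (1/c) * weighted_L1_norm w f"
proof -
  have "(\<integral>\<^sup>+ x. indicator B x * f x \<partial>lebesgue) \<le> (\<integral>\<^sup>+ x. ennreal (1/c) * (f x * ennreal (w x)) \<partial>lebesgue)"
    using lower
  proof (intro nn_integral_mono_AE, eventually_elim)
    case (elim x)
    show ?case
    proof (cases "x \<in> B")
      case True
      then have "1 \<le> (1/c) * w x" using elim \<open>c > 0\<close> by (simp add: field_simps)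
      then have "1 \<le> ennreal (1/c) * ennreal (w x)"
        using \<open>c > 0\<close> by (simp add: ennreal_mult[symmetric] ennreal_leI del: ennreal_1)
      then have "f x * 1 \<le> f x * (ennreal (1/c) * ennreal (w x))" by (intro mult_left_mono) auto
      then show ?thesis using True by (simp add: ac_simps)
    qed simp
  qed
  also have "\<dots> = ennreal (1/c) * weighted_L1_norm w f"
    unfolding weighted_L1_norm_def by (rule nn_integral_cmult) measurable
  finally show ?thesis .
qed

lemma weighted_L1_norm_eq_0_iff:
  assumes "weight w" and [measurable]: "f \<in> borel_measurable lebesgue"
  shows "weighted_L1_norm w f = 0 \<longleftrightarrow> (AE x in lebesgue. f x = 0)"
proof -
  have [measurable]: "w \<in> borel_measurable lebesgue" and pos: "AE x in lebesgue. w x > 0"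
    using assms(1) unfolding weight_def by auto
  have "weighted_L1_norm w f = 0 \<longleftrightarrow> (AE x in lebesgue. f x * ennreal (w x) = 0)"
    unfolding weighted_L1_norm_def by (rule nn_integral_0_iff_AE) measurable
  also have "\<dots> \<longleftrightarrow> (AE x in lebesgue. f x = 0)"
  proof
    assume "AE x in lebesgue. f x * ennreal (w x) = 0"
    with pos show "AE x in lebesgue. f x = 0" by eventually_elim (simp add: ennreal_eq_0_iff not_le)
  qed (auto elim: eventually_mono)
  finally show ?thesis .
qed

lemma weighted_L1_norm_indicator_finite:
  fixes w :: "real^'n \<Rightarrow> real"
  assumes "weight w" "bounded B"
  shows "weighted_L1_norm w (indicator B) < \<infinity>"
proof -
  obtain a h where ah: "h > 0" "B \<subseteq> cbox a (a + h *\<^sub>R One)"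
    using bounded_subset_cube[OF assms(2)] by blast
  have "weighted_L1_norm w (indicator B) \<le> (\<integral>\<^sup>+ x. indicator (cbox a (a + h *\<^sub>R One)) x * ennreal \<bar>w x\<bar> \<partial>lebesgue)"
    unfolding weighted_L1_norm_def using ah(2)
    by (intro nn_integral_mono) (auto split: split_indicator intro: ennreal_leI)
  also have "\<dots> < \<infinity>" by (rule weight_nn_integral_compact_finite[OF assms(1)]) simp
  finally show ?thesis .
qed

lemma banach_function_norm_weighted_L1_norm:
  fixes w :: "real^'n \<Rightarrow> real"
  assumes "weight w" and lower: "\<And>B. bounded B \<Longrightarrow> \<exists>c>0. AE x in lebesgue. x \<in> B \<longrightarrow> c \<le> w x"
  shows "banach_function_norm (weighted_L1_norm w)"
proof -
  have [measurable]: "w \<in> borel_measurable lebesgue"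
    using assms(1) unfolding weight_def by auto
  have zero: "\<forall>f \<in> borel_measurable lebesgue. weighted_L1_norm w f = 0 \<longleftrightarrow> (AE x in lebesgue. f x = 0)"
    using weighted_L1_norm_eq_0_iff[OF assms(1)] by blast
  have hom: "\<forall>f \<in> borel_measurable lebesgue. \<forall>a::real. a > 0 \<longrightarrow>
      weighted_L1_norm w (\<lambda>x. ennreal a * f x) = ennreal a * weighted_L1_norm w f"
    unfolding weighted_L1_norm_def by (simp add: mult.assoc nn_integral_cmult)
  have add: "\<forall>f \<in> borel_measurable lebesgue. \<forall>g \<in> borel_measurable lebesgue.
      weighted_L1_norm w (\<lambda>x. f x + g x) \<le> weighted_L1_norm w f + weighted_L1_norm w g"
    unfolding weighted_L1_norm_def by (simp add: distrib_right nn_integral_add)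
  have mono: "\<forall>f \<in> borel_measurable lebesgue. \<forall>g \<in> borel_measurable lebesgue.
      (AE x in lebesgue. f x \<le> g x) \<longrightarrow> weighted_L1_norm w f \<le> weighted_L1_norm w g"
  proof (intro ballI impI)
    fix f g :: "real^'n \<Rightarrow> ennreal" assume "AE x in lebesgue. f x \<le> g x"
    then show "weighted_L1_norm w f \<le> weighted_L1_norm w g"
      unfolding weighted_L1_norm_def
    proof (intro nn_integral_mono_AE, eventually_elim)
      case (elim x)
      then show ?case by (simp add: mult_right_mono)
    qed
  qed
  have conv: "\<forall>F f. (\<forall>k. F k \<in> borel_measurable lebesgue) \<longrightarrow> f \<in> borel_measurable lebesgue \<longrightarrow>
      (AE x in lebesgue. incseq (\<lambda>k. F k x) \<and> (\<lambda>k. F k x) \<longlonglongrightarrow> f x) \<longrightarrow>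
      incseq (\<lambda>k. weighted_L1_norm w (F k)) \<and> (\<lambda>k. weighted_L1_norm w (F k)) \<longlonglongrightarrow> weighted_L1_norm w f"
    by (intro allI impI weighted_L1_norm_monotone_convergence) auto
  have ind: "\<forall>B. B \<in> sets lebesgue \<longrightarrow> bounded B \<longrightarrow> weighted_L1_norm w (indicator B) < \<infinity>"
    using weighted_L1_norm_indicator_finite[OF assms(1)] by blast
  have loc: "\<forall>B. B \<in> sets lebesgue \<longrightarrow> bounded B \<longrightarrow> (\<exists>C::real. C > 0 \<and> (\<forall>f \<in> borel_measurable lebesgue.
      (\<integral>\<^sup>+ x. indicator B x * f x \<partial>lebesgue) \<le> ennreal C * weighted_L1_norm w f))"
  proof (intro allI impI)
    fix B :: "(real^'n) set" assume "bounded B"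
    then obtain c where "c > 0" "AE x in lebesgue. x \<in> B \<longrightarrow> c \<le> w x" using lower by blast
    then show "\<exists>C::real. C > 0 \<and> (\<forall>f \<in> borel_measurable lebesgue.
        (\<integral>\<^sup>+ x. indicator B x * f x \<partial>lebesgue) \<le> ennreal C * weighted_L1_norm w f)"
      by (intro exI[of _ "1/c"]) (auto intro: weighted_L1_norm_local_integral_le)
  qed
  show ?thesis
    unfolding banach_function_norm_def by (intro conjI zero hom add mono conv ind loc)
qed

lemma assoc_norm_weighted_L1_norm_le:
  assumes [measurable]: "w \<in> borel_measurable lebesgue" and "t \<ge> 0"
    and le: "AE x in lebesgue. h x \<le> ennreal (t * w x)"
  shows "assoc_norm (weighted_L1_norm w) h \<le> ennreal t"
  unfolding assoc_norm_def
proof (rule SUP_least)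
  fix f assume "f \<in> {f \<in> BFS (weighted_L1_norm w). bfs_norm (weighted_L1_norm w) f \<le> 1}"
  then have [measurable]: "f \<in> borel_measurable lebesgue"
    and f: "weighted_L1_norm w (\<lambda>x. ennreal \<bar>f x\<bar>) \<le> 1"
    unfolding BFS_def bfs_norm_def by auto
  have "(\<integral>\<^sup>+ x. ennreal \<bar>f x\<bar> * h x \<partial>lebesgue) \<le> (\<integral>\<^sup>+ x. ennreal t * (ennreal \<bar>f x\<bar> * ennreal (w x)) \<partial>lebesgue)"
    using le
  proof (intro nn_integral_mono_AE, eventually_elim)
    case (elim x)
    then have "ennreal \<bar>f x\<bar> * h x \<le> ennreal \<bar>f x\<bar> * (ennreal t * ennreal (w x))"
      using \<open>t \<ge> 0\<close> by (intro mult_left_mono) (simp_all add: ennreal_mult')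
    then show ?case by (simp add: ac_simps)
  qed
  also have "\<dots> = ennreal t * weighted_L1_norm w (\<lambda>x. ennreal \<bar>f x\<bar>)"
    unfolding weighted_L1_norm_def by (rule nn_integral_cmult) measurable
  also have "\<dots> \<le> ennreal t" using f by (metis mult.right_neutral mult_left_mono zero_le)
  finally show "(\<integral>\<^sup>+ x. ennreal \<bar>f x\<bar> * h x \<partial>lebesgue) \<le> ennreal t" .
qed

text \<open>Testing against the normalised indicator of a set where \<open>|g| > t w\<close> would give norm \<open>\<ge> t\<close>.\<close>

lemma AE_le_if_assoc_norm_weighted_L1_norm_less:
  fixes w g :: "real^'n \<Rightarrow> real"
  assumes "weight w" and [measurable]: "g \<in> borel_measurable lebesgue"
    and lt: "assoc_norm (weighted_L1_norm w) (\<lambda>x. ennreal \<bar>g x\<bar>) < ennreal t"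
  shows "AE x in lebesgue. \<bar>g x\<bar> \<le> t * w x"
proof (rule ccontr)
  have [measurable]: "w \<in> borel_measurable lebesgue" using assms(1) unfolding weight_def by blast
  have "t > 0" using lt by (metis ennreal_less_zero_iff le_less_trans zero_le)
  define E where "E = {x \<in> space lebesgue. t * w x < \<bar>g x\<bar>}"
  have "{x \<in> space lebesgue. t * w x < \<bar>g x\<bar>} \<in> sets lebesgue" by measurable
  then have Em [measurable]: "E \<in> sets lebesgue" unfolding E_def .
  assume "\<not> (AE x in lebesgue. \<bar>g x\<bar> \<le> t * w x)"
  then have "emeasure lebesgue E \<noteq> 0"
    by (subst (asm) AE_iff_measurable[OF Em]) (auto simp: E_def not_le)
  then obtain E' c where E': "E' \<subseteq> E" "E' \<in> sets lebesgue" "c > 0"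
    "(\<integral>\<^sup>+ x. indicator E' x * ennreal (w x) \<partial>lebesgue) = ennreal c"
    by (rule weight_positive_finite_part[OF assms(1) Em])
  have [measurable]: "E' \<in> sets lebesgue" by fact
  define f where "f x = indicator E' x / c" for x
  have [measurable]: "f \<in> borel_measurable lebesgue" unfolding f_def[abs_def] by measurable
  have fabs: "ennreal \<bar>f x\<bar> = ennreal (1/c) * indicator E' x" for x
    using \<open>c > 0\<close> by (auto simp: f_def split: split_indicator)
  have norm_f: "weighted_L1_norm w (\<lambda>x. ennreal \<bar>f x\<bar>) = 1"
    unfolding weighted_L1_norm_def fabs using E'(3,4)
    by (simp add: mult.assoc nn_integral_cmult ennreal_mult[symmetric])
  then have "f \<in> {f \<in> BFS (weighted_L1_norm w). bfs_norm (weighted_L1_norm w) f \<le> 1}"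
    unfolding BFS_def bfs_norm_def f_def[abs_def] by auto
  then have "(\<integral>\<^sup>+ x. ennreal \<bar>f x\<bar> * ennreal \<bar>g x\<bar> \<partial>lebesgue)
      \<le> assoc_norm (weighted_L1_norm w) (\<lambda>x. ennreal \<bar>g x\<bar>)"
    unfolding assoc_norm_def by (rule SUP_upper)
  then have "(\<integral>\<^sup>+ x. ennreal \<bar>f x\<bar> * ennreal \<bar>g x\<bar> \<partial>lebesgue) < ennreal t"
    using lt by (rule le_less_trans)
  moreover have "ennreal t \<le> (\<integral>\<^sup>+ x. ennreal \<bar>f x\<bar> * ennreal \<bar>g x\<bar> \<partial>lebesgue)"
  proof -
    have "(\<integral>\<^sup>+ x. ennreal t * (ennreal \<bar>f x\<bar> * ennreal (w x)) \<partial>lebesgue)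
        = ennreal t * weighted_L1_norm w (\<lambda>x. ennreal \<bar>f x\<bar>)"
      unfolding weighted_L1_norm_def by (rule nn_integral_cmult) measurable
    then have "ennreal t = (\<integral>\<^sup>+ x. ennreal t * (ennreal \<bar>f x\<bar> * ennreal (w x)) \<partial>lebesgue)"
      using norm_f by simp
    also have "\<dots> \<le> (\<integral>\<^sup>+ x. ennreal \<bar>f x\<bar> * ennreal \<bar>g x\<bar> \<partial>lebesgue)"
    proof (intro nn_integral_mono)
      fix x
      show "ennreal t * (ennreal \<bar>f x\<bar> * ennreal (w x)) \<le> ennreal \<bar>f x\<bar> * ennreal \<bar>g x\<bar>"
      proof (cases "x \<in> E'")
        case True
        then have "t * w x < \<bar>g x\<bar>" using E'(1) unfolding E_def by auto
        then have "ennreal t * ennreal (w x) \<le> ennreal \<bar>g x\<bar>"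
          using \<open>t > 0\<close> by (cases "w x \<ge> 0") (auto simp: ennreal_mult[symmetric] ennreal_neg intro: ennreal_leI)
        then have "ennreal \<bar>f x\<bar> * (ennreal t * ennreal (w x)) \<le> ennreal \<bar>f x\<bar> * ennreal \<bar>g x\<bar>"
          by (rule mult_left_mono) simp
        then show ?thesis by (simp add: ac_simps)
      qed (simp add: f_def)
    qed
    finally show ?thesis .
  qed
  ultimately show False by simp
qed

lemma maximal_bounded_on_assoc_weighted_L1_norm:
  assumes A: "w \<in> A1"
  shows "maximal_bounded_on_assoc (weighted_L1_norm w)"
proof -
  obtain C where C: "C \<ge> 1" "AE x in lebesgue. maximal w x \<le> ennreal (C * w x)"
    by (rule A1_constant[OF A])
  have wt: "weight w" by (rule A1_weight[OF A])
  have [measurable]: "w \<in> borel_measurable lebesgue" and pos: "AE x in lebesgue. w x > 0"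
    using wt unfolding weight_def by auto
  have "assoc_norm (weighted_L1_norm w) (maximal g)
      \<le> ennreal C * assoc_norm (weighted_L1_norm w) (\<lambda>x. ennreal \<bar>g x\<bar>)"
    if "g \<in> assoc_space (weighted_L1_norm w)" for g
  proof (rule ennreal_le_mult_if_forall_less)
    have gm [measurable]: "g \<in> borel_measurable lebesgue" using that unfolding assoc_space_def by blast
    fix t assume lt: "assoc_norm (weighted_L1_norm w) (\<lambda>x. ennreal \<bar>g x\<bar>) < ennreal t"
    then have "t > 0" by (metis ennreal_less_zero_iff le_less_trans zero_le)
    have "AE x in lebesgue. \<bar>g x\<bar> \<le> t * \<bar>w x\<bar>"
      using AE_le_if_assoc_norm_weighted_L1_norm_less[OF wt gm lt] pos
      by eventually_elim simp
    then have Mg: "maximal g x \<le> ennreal t * maximal w x" for x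
      using \<open>t > 0\<close> by (intro maximal_le_scaled) auto
    have "AE x in lebesgue. maximal g x \<le> ennreal (C * t * w x)"
      using C(2) pos
    proof eventually_elim
      case (elim x)
      have "maximal g x \<le> ennreal t * ennreal (C * w x)"
        using Mg[of x] elim(1) by (meson mult_left_mono order_trans zero_le)
      also have "\<dots> = ennreal (C * t * w x)"
        using \<open>t > 0\<close> C(1) elim(2) by (simp add: ennreal_mult[symmetric] ac_simps)
      finally show ?case .
    qed
    then show "assoc_norm (weighted_L1_norm w) (maximal g) \<le> ennreal (C * t)"
      using \<open>t > 0\<close> C(1) by (intro assoc_norm_weighted_L1_norm_le) (auto simp: mult.assoc)
  qed (use C in simp)
  then show ?thesis unfolding maximal_bounded_on_assoc_def by blast
qed

subsection \<open>Rubio de Francia's algorithm\<close>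

definition maximal_iterates :: "(real^'n \<Rightarrow> ennreal) \<Rightarrow> nat \<Rightarrow> real^'n \<Rightarrow> ennreal" where
  "maximal_iterates h k = ((\<lambda>u. maximal (\<lambda>x. enn2real (u x))) ^^ k) h"

lemma maximal_iterates_0 [simp]: "maximal_iterates h 0 = h"
  and maximal_iterates_Suc [simp]:
    "maximal_iterates h (Suc k) = maximal (\<lambda>x. enn2real (maximal_iterates h k x))"
  by (simp_all add: maximal_iterates_def)

lemma borel_measurable_maximal_iterates [measurable]:
  "h \<in> borel_measurable lebesgue \<Longrightarrow> maximal_iterates h k \<in> borel_measurable lebesgue"
  by (cases k) simp_all

lemma assoc_norm_maximal_iterates_le:
  assumes bfn: "banach_function_norm \<rho>" and "C \<ge> 0"
    and bound: "\<And>g. g \<in> assoc_space \<rho> \<Longrightarrow>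
      assoc_norm \<rho> (maximal g) \<le> ennreal C * assoc_norm \<rho> (\<lambda>x. ennreal \<bar>g x\<bar>)"
    and [measurable]: "h \<in> borel_measurable lebesgue" and fin: "assoc_norm \<rho> h < \<infinity>"
  shows "assoc_norm \<rho> (maximal_iterates h k) \<le> ennreal (C ^ k) * assoc_norm \<rho> h"
proof (induction k)
  case 0
  then show ?case by simp
next
  case (Suc k)
  have "ennreal (C ^ k) * assoc_norm \<rho> h < \<infinity>" using fin by (simp add: ennreal_mult_less_top)
  with Suc.IH have "assoc_norm \<rho> (maximal_iterates h k) < \<infinity>" by (rule le_less_trans)
  then have gX: "(\<lambda>x. enn2real (maximal_iterates h k x)) \<in> assoc_space \<rho>"
    by (intro enn2real_in_assoc_space[OF bfn]) measurable
  have "assoc_norm \<rho> (maximal_iterates h (Suc k))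
      \<le> ennreal C * assoc_norm \<rho> (\<lambda>x. ennreal \<bar>enn2real (maximal_iterates h k x)\<bar>)"
    using bound[OF gX] by simp
  also have "\<dots> \<le> ennreal C * assoc_norm \<rho> (maximal_iterates h k)"
    by (intro mult_left_mono assoc_norm_mono) (auto simp: ennreal_enn2real_if)
  also have "\<dots> \<le> ennreal C * (ennreal (C ^ k) * assoc_norm \<rho> h)"
    by (intro mult_left_mono Suc.IH) simp
  also have "\<dots> = ennreal (C ^ Suc k) * assoc_norm \<rho> h"
    using \<open>C \<ge> 0\<close> by (simp add: ennreal_mult mult.assoc)
  finally show ?case .
qed

text \<open>With \<open>C\<close> a bound for \<open>M\<close> on the associate space, the factor \<open>(2C)\<^sup>-\<^sup>k\<close> makes the series
  converge there, while the shift \<open>M (M\<^sup>k h) = M\<^sup>k\<^sup>+\<^sup>1 h\<close> costs only a factor \<open>2C\<close>.\<close>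

definition rubio_de_francia :: "real \<Rightarrow> (real^'n \<Rightarrow> ennreal) \<Rightarrow> real^'n \<Rightarrow> ennreal" where
  "rubio_de_francia C h x = (\<Sum>k. ennreal ((1 / (2 * C)) ^ k) * maximal_iterates h k x)"

lemma borel_measurable_rubio_de_francia [measurable]:
  "h \<in> borel_measurable lebesgue \<Longrightarrow> rubio_de_francia C h \<in> borel_measurable lebesgue"
  unfolding rubio_de_francia_def[abs_def] by measurable

lemma le_rubio_de_francia: "h x \<le> rubio_de_francia C h x"
  using ennreal_le_suminf[of "\<lambda>k. ennreal ((1 / (2 * C)) ^ k) * maximal_iterates h k x" 0]
  by (simp add: rubio_de_francia_def)

lemma assoc_norm_rubio_de_francia_le:
  assumes bfn: "banach_function_norm \<rho>" and "C > 0"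
    and bound: "\<And>g. g \<in> assoc_space \<rho> \<Longrightarrow>
      assoc_norm \<rho> (maximal g) \<le> ennreal C * assoc_norm \<rho> (\<lambda>x. ennreal \<bar>g x\<bar>)"
    and [measurable]: "h \<in> borel_measurable lebesgue" and fin: "assoc_norm \<rho> h < \<infinity>"
  shows "assoc_norm \<rho> (rubio_de_francia C h) \<le> 2 * assoc_norm \<rho> h"
proof -
  have "assoc_norm \<rho> (rubio_de_francia C h)
      \<le> (\<Sum>k. ennreal ((1 / (2 * C)) ^ k) * assoc_norm \<rho> (maximal_iterates h k))"
    unfolding rubio_de_francia_def[abs_def] by (rule assoc_norm_suminf_le) measurable
  also have "\<dots> \<le> (\<Sum>k. ennreal ((1 / (2 * C)) ^ k) * (ennreal (C ^ k) * assoc_norm \<rho> h))"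
    using assoc_norm_maximal_iterates_le[OF bfn _ bound] \<open>C > 0\<close> fin
    by (intro suminf_le summableI mult_left_mono) auto
  also have "\<dots> = (\<Sum>k. ennreal ((1/2) ^ k) * assoc_norm \<rho> h)"
  proof (rule suminf_cong)
    fix k
    have "(1 / (2 * C)) ^ k * C ^ k = (1/2) ^ k"
      using \<open>C > 0\<close> by (simp add: power_mult_distrib[symmetric])
    then show "ennreal ((1 / (2 * C)) ^ k) * (ennreal (C ^ k) * assoc_norm \<rho> h) = ennreal ((1/2) ^ k) * assoc_norm \<rho> h"
      using \<open>C > 0\<close> by (simp add: mult.assoc[symmetric] ennreal_mult[symmetric])
  qed
  finally show ?thesis by (simp add: ennreal_suminf_geometric_half)
qed

lemma maximal_rubio_de_francia_le:
  assumes "C > 0" and [measurable]: "h \<in> borel_measurable lebesgue"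
  shows "maximal (\<lambda>y. enn2real (rubio_de_francia C h y)) x \<le> ennreal (2 * C) * rubio_de_francia C h x"
proof -
  define c where "c = 1 / (2 * C)"
  define H where "H = maximal_iterates h"
  have c: "c > 0" "2 * C * c = 1" using \<open>C > 0\<close> by (auto simp: c_def)
  have [measurable]: "H k \<in> borel_measurable lebesgue" for k unfolding H_def by measurable
  have Hm: "(\<lambda>y. enn2real (H k y)) \<in> borel_measurable lebesgue" for k by measurable
  have R: "rubio_de_francia C h y = (\<Sum>k. ennreal (c ^ k) * H k y)" for y
    by (simp add: rubio_de_francia_def c_def H_def)
  have dom: "ennreal \<bar>enn2real (rubio_de_francia C h y)\<bar> \<le> (\<Sum>k. ennreal \<bar>c ^ k * enn2real (H k y)\<bar>)" for y
  proof (cases "rubio_de_francia C h y = \<infinity>")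
    case False
    have term_le: "ennreal (c ^ k) * H k y \<le> rubio_de_francia C h y" for k
      unfolding R by (rule ennreal_le_suminf)
    have "H k y \<noteq> \<infinity>" for k
    proof
      assume "H k y = \<infinity>"
      then have "ennreal (c ^ k) * H k y = \<infinity>" using c(1) by (simp add: ennreal_mult_top)
      with term_le[of k] False show False by (simp add: top_unique)
    qed
    then have "ennreal \<bar>c ^ k * enn2real (H k y)\<bar> = ennreal (c ^ k) * H k y" for k
      using c(1) by (simp add: abs_mult ennreal_mult ennreal_enn2real_if)
    then show ?thesis using False by (simp add: R ennreal_enn2real_if)
  qed simp
  have "maximal (\<lambda>y. enn2real (rubio_de_francia C h y)) x \<le> (\<Sum>k. maximal (\<lambda>y. c ^ k * enn2real (H k y)) x)"
    by (rule maximal_suminf_le[OF _ AE_I2[OF dom]]) measurable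
  also have "\<dots> \<le> (\<Sum>k. ennreal (c ^ k) * H (Suc k) x)"
  proof (intro suminf_le summableI)
    fix k
    have "maximal (\<lambda>y. c ^ k * enn2real (H k y)) x \<le> ennreal (c ^ k) * maximal (\<lambda>y. enn2real (H k y)) x"
      using c(1) by (intro maximal_le_scaled[OF Hm]) (auto simp: abs_mult)
    then show "maximal (\<lambda>y. c ^ k * enn2real (H k y)) x \<le> ennreal (c ^ k) * H (Suc k) x"
      by (simp add: H_def)
  qed
  also have "\<dots> = (\<Sum>k. ennreal (2 * C) * (ennreal (c ^ Suc k) * H (Suc k) x))"
  proof (rule suminf_cong)
    fix k
    have "ennreal (2 * C) * ennreal (c ^ Suc k) = ennreal (c ^ k)"
      using c \<open>C > 0\<close> by (simp add: ennreal_mult[symmetric] mult.assoc[symmetric])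
    then show "ennreal (c ^ k) * H (Suc k) x = ennreal (2 * C) * (ennreal (c ^ Suc k) * H (Suc k) x)"
      by (simp only: mult.assoc[symmetric])
  qed
  also have "\<dots> = ennreal (2 * C) * (\<Sum>k. ennreal (c ^ Suc k) * H (Suc k) x)"
    by (rule ennreal_suminf_cmult)
  also have "\<dots> \<le> ennreal (2 * C) * rubio_de_francia C h x"
    unfolding R by (intro mult_left_mono ennreal_suminf_Suc_le[of "\<lambda>k. ennreal (c ^ k) * H k x"]) simp
  finally show ?thesis .
qed

lemma enn2real_rubio_de_francia_in_assoc_space_A1:
  fixes \<rho> :: "(real^'n \<Rightarrow> ennreal) \<Rightarrow> ennreal"
  assumes bfn: "banach_function_norm \<rho>" and "C > 0"
    and hm [measurable]: "h \<in> borel_measurable lebesgue" and pos: "\<And>x. h x > 0"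
    and fin: "assoc_norm \<rho> (rubio_de_francia C h) < \<infinity>"
  shows "(\<lambda>x. enn2real (rubio_de_francia C h x)) \<in> assoc_space \<rho> \<inter> A1"
proof -
  define R where "R = rubio_de_francia C h"
  define w where "w x = enn2real (R x)" for x
  have [measurable]: "R \<in> borel_measurable lebesgue" "w \<in> borel_measurable lebesgue"
    unfolding R_def w_def[abs_def] by measurable
  have wX: "w \<in> assoc_space \<rho>"
    unfolding w_def R_def by (rule enn2real_in_assoc_space[OF bfn _ fin]) measurable
  have Rfin: "AE x in lebesgue. R x \<noteq> \<infinity>"
    unfolding R_def by (rule AE_finite_if_assoc_norm_finite[OF bfn _ fin]) measurable
  have w_nonneg: "w x \<ge> 0" for x by (simp add: w_def)
  have R_eq: "AE x in lebesgue. R x = ennreal (w x)"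
    using Rfin by eventually_elim (simp add: w_def ennreal_enn2real_if)
  have "AE x in lebesgue. w x > 0"
    using Rfin
  proof eventually_elim
    case (elim x)
    have "0 < R x"
      using pos[of x] le_rubio_de_francia[of h x C] unfolding R_def by (rule less_le_trans)
    with elim show ?case by (simp add: w_def enn2real_positive_iff less_top)
  qed
  then have "weight w"
    unfolding weight_def using assoc_space_set_integrable[OF bfn wX] by simp
  moreover have "AE x in lebesgue. maximal w x \<le> ennreal (2 * C * w x)"
    using R_eq
  proof eventually_elim
    case (elim x)
    have "maximal w x \<le> ennreal (2 * C) * R x"
      unfolding w_def[abs_def] R_def by (rule maximal_rubio_de_francia_le[OF \<open>C > 0\<close> hm])
    also have "\<dots> = ennreal (2 * C * w x)"
      using \<open>C > 0\<close> w_nonneg[of x] by (simp add: elim ennreal_mult)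
    finally show ?case .
  qed
  ultimately have "w \<in> A1" unfolding A1_def by blast
  with wX show ?thesis unfolding w_def R_def by blast
qed

lemma assoc_space_inter_A1_nonempty:
  fixes \<rho> :: "(real^'n \<Rightarrow> ennreal) \<Rightarrow> ennreal"
  assumes bfn: "banach_function_norm \<rho>" and "maximal_bounded_on_assoc \<rho>"
  shows "assoc_space \<rho> \<inter> A1 \<noteq> {}"
proof -
  obtain C0 where C0: "\<And>g. g \<in> assoc_space \<rho> \<Longrightarrow>
      assoc_norm \<rho> (maximal g) \<le> ennreal C0 * assoc_norm \<rho> (\<lambda>x. ennreal \<bar>g x\<bar>)"
    using assms(2) unfolding maximal_bounded_on_assoc_def by blast
  define C where "C = max C0 1"
  have "C > 0" unfolding C_def by simp
  have bound: "assoc_norm \<rho> (maximal g) \<le> ennreal C * assoc_norm \<rho> (\<lambda>x. ennreal \<bar>g x\<bar>)"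
    if "g \<in> assoc_space \<rho>" for g
  proof -
    have "ennreal C0 * assoc_norm \<rho> (\<lambda>x. ennreal \<bar>g x\<bar>) \<le> ennreal C * assoc_norm \<rho> (\<lambda>x. ennreal \<bar>g x\<bar>)"
      unfolding C_def by (intro mult_right_mono ennreal_leI) auto
    with C0[OF that] show ?thesis by (rule order_trans)
  qed
  obtain h where hm: "h \<in> borel_measurable lebesgue" and h: "\<And>x. h x > 0" "assoc_norm \<rho> h \<le> 2"
    using exists_positive_assoc_norm_le[OF bfn] by blast
  have "assoc_norm \<rho> h < \<infinity>" using h(2) by (simp add: le_less_trans)
  then have "assoc_norm \<rho> (rubio_de_francia C h) \<le> 2 * assoc_norm \<rho> h"
    using assoc_norm_rubio_de_francia_le[OF bfn \<open>C > 0\<close> bound hm] by blast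
  also have "\<dots> \<le> 2 * 2" using h(2) by (intro mult_left_mono) auto
  finally have "assoc_norm \<rho> (rubio_de_francia C h) < \<infinity>" by (simp add: le_less_trans)
  then show ?thesis
    using enn2real_rubio_de_francia_in_assoc_space_A1[OF bfn \<open>C > 0\<close> hm h(1)] by blast
qed

subsection \<open>The three unions\<close>

lemma BFS_subset_L1w_if_in_assoc_space:
  assumes "w \<in> assoc_space \<rho>"
  shows "BFS \<rho> \<subseteq> L1w w"
proof
  fix f assume f: "f \<in> BFS \<rho>"
  then have "integrable lebesgue (\<lambda>x. f x * w x)" using assms unfolding assoc_space_def by blast
  then have "(\<integral>\<^sup>+ x. ennreal (norm (f x * w x)) \<partial>lebesgue) < \<infinity>"
    unfolding integrable_iff_bounded by blast
  moreover have "(\<integral>\<^sup>+ x. ennreal (\<bar>f x\<bar> * w x) \<partial>lebesgue) \<le> (\<integral>\<^sup>+ x. ennreal (norm (f x * w x)) \<partial>lebesgue)"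
    by (intro nn_integral_mono ennreal_leI) (simp add: abs_mult mult_left_mono)
  ultimately show "f \<in> L1w w" using f unfolding L1w_def BFS_def by auto
qed

theorem mainTheorem19:
  shows "(\<Union>w\<in>(A1 :: (real^'n \<Rightarrow> real) set). L1w w)
           = \<Union>{BFS \<rho> | \<rho> :: (real^'n \<Rightarrow> ennreal) \<Rightarrow> ennreal.
                  banach_function_norm \<rho> \<and> maximal_bounded_on_assoc \<rho>}
       \<and> \<Union>{BFS \<rho> | \<rho> :: (real^'n \<Rightarrow> ennreal) \<Rightarrow> ennreal.
                  banach_function_norm \<rho> \<and> maximal_bounded_on_assoc \<rho>}
           = \<Union>{BFS \<rho> | \<rho> :: (real^'n \<Rightarrow> ennreal) \<Rightarrow> ennreal.
                  banach_function_norm \<rho> \<and> assoc_space \<rho> \<inter> A1 \<noteq> {}}"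
    (is "?U1 = ?U2 \<and> _ = ?U3")
proof -
  have U12: "?U1 \<subseteq> ?U2"
  proof (rule UN_least)
    fix w :: "real^'n \<Rightarrow> real" assume "w \<in> A1"
    then have "banach_function_norm (weighted_L1_norm w)"
      using A1_bounded_below[OF \<open>w \<in> A1\<close>]
      by (intro banach_function_norm_weighted_L1_norm A1_weight) blast+
    moreover have "maximal_bounded_on_assoc (weighted_L1_norm w)"
      using \<open>w \<in> A1\<close> by (rule maximal_bounded_on_assoc_weighted_L1_norm)
    ultimately show "L1w w \<subseteq> ?U2" unfolding BFS_weighted_L1_norm[symmetric] by blast
  qed
  have U23: "?U2 \<subseteq> ?U3"
  proof
    fix f assume "f \<in> ?U2"
    then obtain \<rho> :: "(real^'n \<Rightarrow> ennreal) \<Rightarrow> ennreal" where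
      "f \<in> BFS \<rho>" "banach_function_norm \<rho>" "maximal_bounded_on_assoc \<rho>" by blast
    then show "f \<in> ?U3" using assoc_space_inter_A1_nonempty by blast
  qed
  have U31: "?U3 \<subseteq> ?U1"
  proof
    fix f assume "f \<in> ?U3"
    then obtain \<rho> :: "(real^'n \<Rightarrow> ennreal) \<Rightarrow> ennreal" and w where
      "f \<in> BFS \<rho>" "w \<in> assoc_space \<rho>" "w \<in> A1" by blast
    then show "f \<in> ?U1" using BFS_subset_L1w_if_in_assoc_space by blast
  qed
  show ?thesis
    using equalityI[OF U12 order_trans[OF U23 U31]] equalityI[OF U23 order_trans[OF U31 U12]]
    by (rule conjI)
qed

end
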